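(* In the setting described in the context, let $\epsilon\in\{\pm1\}$ be the sign of $a(\tilde\alpha_0h')$ and $l=|a(\tilde\alpha_0h')|/t$. Then for every $0\le j\le r$ there is an integer $m_j\in\mathbb Z$ such that $\epsilon l\alpha_j=\tilde\alpha_jh'+m_jh'$.
   Context: Let $\mathbb K$ be a number field of degree $d=r+2\ge2$ with exactly one pair of complex conjugate embeddings; order its embeddings $\sigma_1,\dots,\sigma_r$ (real), $\sigma_{\mathbb C}$, $\overline{\sigma_{\mathbb C}}$. A $\mathbb Q$-basis $(e_0,\dots,e_{r+1})$ of $\mathbb K$ is positive if $i\cdot\det(\sigma_j(e_{k-1}))_{1\le j,k\le d}>0$. Let $\mathfrak f\ne\mathcal O_{\mathbb K}$ be an integral ideal, $q\mathbb Z=\mathfrak f\cap\mathbb Z$, $\mathfrak b$ an integral ideal coprime to $\mathfrak f$, $L=\mathfrak f\mathfrak b^{-1}$, $\mathfrak a$ an integral ideal coprime to $\mathfrak f\mathfrak b$ with $\mathfrak a^{-1}L/L$ cyclic, $N=\mathcal N(\mathfrak a)$. An element $h\in L$ is admissible if $h/q-1\in L$ and $h/N$ generates $\mathfrak a^{-1}L/L$. Let $\mathcal O^{+,\times}_{\mathfrak f}$ be the group of units $\equiv1\bmod\mathfrak f$ positive at all real embeddings. Let $u_1,\dots,u_r\in\mathcal O^{+,\times}_{\mathfrak f}$ with $1,u_1,\dots,u_r$ linearly independent over $\mathbb Q$, $u_0=1$. For $h$: $h\in L$ admissible, $h=mh'$, $m\in\mathbb Z_{>0}$, $h'$ primitive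 in $L$. Fix a positive $\mathbb Z$-basis $(e_0=h',e_1,\dots,e_{r+1})$ of $L$ with $u_jh'=\sum_{k=0}^jc_{jk0}e_k$, $c_{jk0}\in\mathbb Z$, $c_{jj0}>0$; $\lambda=\prod_jc_{jj0}$; $a:L\to\mathbb Z$ with $\lambda a=\det(h',u_1h',\dots,u_rh',\cdot)$ in this basis; $au_j:y\mapsto a(u_jy)$; $\mathcal A=(au_j(e_k))_{0\le j\le r,1\le k\le r+1}$, elementary divisors $1=A_0\mid\dots\mid A_r$, $t=A_r$; $\alpha_j=\sum_{i=1}^{r+1}b_{ij}e_i$ with $(b_{ij})=t\mathcal A^{-1}$, so $au_k(\alpha_j)=t\delta_{jk}$. For $1$: fix a positive $\mathbb Z$-basis $(1,\tilde e_1,\dots,\tilde e_{r+1})$ of $\mathcal O_{\mathbb K}$ with $u_j=\sum_{k=0}^j\tilde c_{jk0}\tilde e_k$ ($\tilde e_0=1$), $\tilde c_{jj0}>0$; $\tilde\lambda=\prod_j\tilde c_{jj0}$; $\tilde a$ with $\tilde\lambda\tilde a=\det(1,u_1,\dots,u_r,\cdot)$; $\tilde{\mathcal A}=(\tilde au_j(\tilde e_k))$, elementary divisors $1=\tilde A_0\mid\dots\mid\tilde A_r$, $\tilde t=\tilde A_r$; $\tilde\alpha_j=\sum_{i=1}^{r+1}\tilde b_{ij}\tilde e_i$ with $(\tilde b_{ij})=\tilde t\tilde{\mathcal A}^{-1}$. *)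

theory Defs
  imports "HOL-Analysis.Analysis" "HOL-Computational_Algebra.Polynomial"
begin

text \<open>The number field K is modelled as a type 'k of class field_char_0;
  it is Q-vector space via of_rat. Finite families are functions nat => _,
  only indices below the stated length matter.\<close>

definition detn :: "nat \<Rightarrow> (nat \<Rightarrow> nat \<Rightarrow> 'a::comm_ring_1) \<Rightarrow> 'a" where
  "detn n M = (\<Sum>p | p permutes {..<n}. of_int (sign p) * (\<Prod>i<n. M i (p i)))"

definition is_Q_basis :: "nat \<Rightarrow> (nat \<Rightarrow> 'k::field_char_0) \<Rightarrow> bool" where
  "is_Q_basis n e \<longleftrightarrow>
     (\<forall>x. \<exists>!c::nat\<Rightarrow>rat. (\<forall>k\<ge>n. c k = 0) \<and> x = (\<Sum>k<n. of_rat (c k) * e k))"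

definition Q_lin_indep :: "nat \<Rightarrow> (nat \<Rightarrow> 'k::field_char_0) \<Rightarrow> bool" where
  "Q_lin_indep n v \<longleftrightarrow>
     (\<forall>c::nat\<Rightarrow>rat. (\<Sum>k<n. of_rat (c k) * v k) = 0 \<longrightarrow> (\<forall>k<n. c k = 0))"

definition is_Z_basis :: "nat \<Rightarrow> 'k::field_char_0 set \<Rightarrow> (nat \<Rightarrow> 'k) \<Rightarrow> bool" where
  "is_Z_basis n L e \<longleftrightarrow>
     (\<forall>x. x \<in> L \<longleftrightarrow> (\<exists>c::nat\<Rightarrow>int. x = (\<Sum>k<n. of_int (c k) * e k))) \<and>
     (\<forall>c::nat\<Rightarrow>int. (\<Sum>k<n. of_int (c k) * e k) = 0 \<longrightarrow> (\<forall>k<n. c k = 0))"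

definition zcoord :: "nat \<Rightarrow> (nat \<Rightarrow> 'k::field_char_0) \<Rightarrow> 'k \<Rightarrow> nat \<Rightarrow> int" where
  "zcoord n e x = (THE c. (\<forall>k\<ge>n. c k = 0) \<and> x = (\<Sum>k<n. of_int (c k) * e k))"

definition embedding :: "('k::field_char_0 \<Rightarrow> complex) \<Rightarrow> bool" where
  "embedding \<tau> \<longleftrightarrow> \<tau> 1 = 1 \<and> (\<forall>x y. \<tau> (x + y) = \<tau> x + \<tau> y) \<and> (\<forall>x y. \<tau> (x * y) = \<tau> x * \<tau> y)"

definition positive_basis :: "nat \<Rightarrow> (nat \<Rightarrow> 'k::field_char_0 \<Rightarrow> complex) \<Rightarrow> (nat \<Rightarrow> 'k) \<Rightarrow> bool" where
  "positive_basis n \<sigma> e \<longleftrightarrow>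
     (let D = \<i> * detn n (\<lambda>j k. \<sigma> j (e k)) in Im D = 0 \<and> Re D > 0)"

definition alg_int :: "'k::field_char_0 \<Rightarrow> bool" where
  "alg_int x \<longleftrightarrow> (\<exists>p::int poly. lead_coeff p = 1 \<and> poly (map_poly of_int p) x = 0)"

definition O_K :: "'k::field_char_0 set" where
  "O_K = {x. alg_int x}"

definition int_ideal :: "'k::field_char_0 set \<Rightarrow> bool" where
  "int_ideal I \<longleftrightarrow> I \<subseteq> O_K \<and> I \<noteq> {0} \<and> 0 \<in> I \<and> (\<forall>x\<in>I. \<forall>y\<in>I. x + y \<in> I) \<and>
     (\<forall>x\<in>I. \<forall>y\<in>O_K. y * x \<in> I)"

definition ideal_mult :: "'k::field_char_0 set \<Rightarrow> 'k set \<Rightarrow> 'k set" where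
  "ideal_mult I J = {(\<Sum>i<n. x i * y i) | (n::nat) x y. \<forall>i<n. x i \<in> I \<and> y i \<in> J}"

definition ideal_add :: "'k::field_char_0 set \<Rightarrow> 'k set \<Rightarrow> 'k set" where
  "ideal_add I J = {x + y | x y. x \<in> I \<and> y \<in> J}"

definition frac_inv :: "'k::field_char_0 set \<Rightarrow> 'k set" where
  "frac_inv I = {x. \<forall>y\<in>I. x * y \<in> O_K}"

definition coprime_ideals :: "'k::field_char_0 set \<Rightarrow> 'k set \<Rightarrow> bool" where
  "coprime_ideals I J \<longleftrightarrow> ideal_add I J = O_K"

definition ideal_norm :: "'k::field_char_0 set \<Rightarrow> nat" where
  "ideal_norm I = card ((\<lambda>x. (\<lambda>y. x + y) ` I) ` O_K)"

definition generates_quot :: "'k::field_char_0 set \<Rightarrow> 'k set \<Rightarrow> 'k \<Rightarrow> bool" where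
  "generates_quot M L g \<longleftrightarrow> g \<in> M \<and> (\<forall>x\<in>M. \<exists>n::int. x - of_int n * g \<in> L)"

definition cyclic_quot :: "'k::field_char_0 set \<Rightarrow> 'k set \<Rightarrow> bool" where
  "cyclic_quot M L \<longleftrightarrow> (\<exists>g. generates_quot M L g)"

definition admissible :: "'k::field_char_0 set \<Rightarrow> 'k set \<Rightarrow> int \<Rightarrow> nat \<Rightarrow> 'k \<Rightarrow> bool" where
  "admissible L a q N h \<longleftrightarrow> h \<in> L \<and> h / of_int q - 1 \<in> L \<and>
     generates_quot (ideal_mult (frac_inv a) L) L (h / of_nat N)"

definition primitive_in :: "'k::field_char_0 set \<Rightarrow> 'k \<Rightarrow> bool" where
  "primitive_in L x \<longleftrightarrow> x \<in> L \<and> (\<forall>n::int. \<forall>y\<in>L. x = of_int n * y \<longrightarrow> \<bar>n\<bar> = 1)"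

definition pos_units_mod :: "nat \<Rightarrow> (nat \<Rightarrow> 'k::field_char_0 \<Rightarrow> complex) \<Rightarrow> 'k set \<Rightarrow> 'k set" where
  "pos_units_mod r \<sigma> f = {u. u \<noteq> 0 \<and> u \<in> O_K \<and> inverse u \<in> O_K \<and> u - 1 \<in> f \<and>
      (\<forall>j<r. Re (\<sigma> j u) > 0)}"

definition lam :: "nat \<Rightarrow> (nat \<Rightarrow> 'k::field_char_0) \<Rightarrow> (nat \<Rightarrow> 'k) \<Rightarrow> 'k \<Rightarrow> int" where
  "lam r e u h = (\<Prod>j\<le>r. zcoord (r+2) e (u j * h) j)"

(* the form a, with lambda * a(y) = det(h, u_1 h, ..., u_r h, y) in the basis e *)
definition form_a :: "nat \<Rightarrow> (nat \<Rightarrow> 'k::field_char_0) \<Rightarrow> (nat \<Rightarrow> 'k) \<Rightarrow> 'k \<Rightarrow> 'k \<Rightarrow> rat" where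
  "form_a r e u h y = of_int (detn (r+2) (\<lambda>i k. if k \<le> r then zcoord (r+2) e (u k * h) i
                                                   else zcoord (r+2) e y i)) / of_int (lam r e u h)"

(* the matrix \<A>, 0-indexed: entry (j,k) = a(u_j e_{k+1}), 0 \<le> j,k \<le> r *)
definition Amat :: "nat \<Rightarrow> (nat \<Rightarrow> 'k::field_char_0) \<Rightarrow> (nat \<Rightarrow> 'k) \<Rightarrow> 'k \<Rightarrow> nat \<Rightarrow> nat \<Rightarrow> rat" where
  "Amat r e u h j k = form_a r e u h (u j * e (k + 1))"

definition elem_divisors :: "nat \<Rightarrow> (nat \<Rightarrow> nat \<Rightarrow> rat) \<Rightarrow> (nat \<Rightarrow> int) \<Rightarrow> bool" where
  "elem_divisors n M A \<longleftrightarrow>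
     (\<exists>P Q :: nat \<Rightarrow> nat \<Rightarrow> int. detn n P \<in> {1, -1} \<and> detn n Q \<in> {1, -1} \<and>
        (\<forall>i<n. \<forall>j<n. (\<Sum>k<n. \<Sum>l<n. of_int (P i k) * M k l * of_int (Q l j))
                      = (if i = j then of_int (A i) else 0))) \<and>
     (\<forall>i<n. A i \<ge> 0) \<and> (\<forall>i. Suc i < n \<longrightarrow> A i dvd A (Suc i))"

definition basis_data ::
  "nat \<Rightarrow> (nat \<Rightarrow> 'k::field_char_0 \<Rightarrow> complex) \<Rightarrow> (nat \<Rightarrow> 'k) \<Rightarrow> 'k set \<Rightarrow> 'k
    \<Rightarrow> (nat \<Rightarrow> 'k) \<Rightarrow> (nat \<Rightarrow> int) \<Rightarrow> int \<Rightarrow> (nat \<Rightarrow> nat \<Rightarrow> rat) \<Rightarrow> (nat \<Rightarrow> 'k) \<Rightarrow> bool" where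
  "basis_data r \<sigma> u L h e A t b \<alpha> \<longleftrightarrow>
     is_Z_basis (r+2) L e \<and> positive_basis (r+2) \<sigma> e \<and> e 0 = h \<and>
     (\<forall>j\<le>r. (\<forall>k. j < k \<longrightarrow> zcoord (r+2) e (u j * h) k = 0) \<and> zcoord (r+2) e (u j * h) j > 0) \<and>
     elem_divisors (r+1) (Amat r e u h) A \<and> A 0 = 1 \<and> t = A r \<and>
     (\<forall>k\<le>r. \<forall>j\<le>r. (\<Sum>i\<in>{1..r+1}. Amat r e u h k (i - 1) * b i j)
                        = (if k = j then of_int t else 0)) \<and>
     (\<forall>j. \<alpha> j = (\<Sum>i\<in>{1..r+1}. of_rat (b i j) * e i))"

end

theory Submission
  imports Defs "Jordan_Normal_Form.Determinant" "Jordan_Normal_Form.Char_Poly"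
begin

text \<open>Extended \<open>\<rat>\<close>-linearly to \<open>K\<close>, the form \<open>a\<close> is a determinant against
  \<open>h', u\<^sub>1h', \<dots>, u\<^sub>rh'\<close>, so its kernel is the hyperplane they span. Hence \<open>y \<mapsto> a(yh')\<close> is
  a rational multiple \<open>c\<close> of the corresponding form for \<open>(\<O>\<^sub>K, 1)\<close>, and an element whose
  multiples by all \<open>u\<^sub>k\<close> lie in \<open>ker a\<close> is a rational multiple of \<open>h'\<close>. The element \<open>\<alpha>\<^sub>j\<close>
  satisfies \<open>a(u\<^sub>k\<alpha>\<^sub>j) = t\<delta>\<^sub>j\<^sub>k\<close>, while \<open>\<alpha>t\<^sub>jh' \<in> L\<close> satisfies \<open>a(u\<^sub>k\<alpha>t\<^sub>jh') = c tt \<delta>\<^sub>j\<^sub>k\<close>, and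
  \<open>\<epsilon>l = a(\<alpha>t\<^sub>0h')/t = c tt/t\<close>. So \<open>\<epsilon>l\<alpha>\<^sub>j - \<alpha>t\<^sub>jh'\<close> is a rational multiple of \<open>h' = e\<^sub>0\<close>,
  and since \<open>\<alpha>\<^sub>j\<close> has no \<open>e\<^sub>0\<close>-coordinate, the multiple is the integral \<open>e\<^sub>0\<close>-coordinate of
  \<open>-\<alpha>t\<^sub>jh'\<close>. That \<open>\<alpha>t\<^sub>j\<close> is integral comes from the Smith normal form: \<open>t\<A>\<^sup>-\<^sup>1\<close> is the integral
  matrix \<open>Q diag(t/A\<^sub>i) P\<close>.\<close>

section \<open>Rational and integral coordinates\<close>

lemma Q_lin_indep_coeff_eq:
  assumes "Q_lin_indep n e" "(\<Sum>k<n. of_rat (c k) * e k) = (\<Sum>k<n. of_rat (d k) * e k)" "k < n"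
  shows "c k = d k"
proof -
  have "(\<Sum>k<n. of_rat (c k - d k) * e k) = 0"
    using assms(2) by (simp add: of_rat_diff left_diff_distrib sum_subtractf)
  then show ?thesis
    using assms(1,3) unfolding Q_lin_indep_def by fastforce
qed

lemma is_Z_basis_coeff_eq:
  assumes "is_Z_basis n S e" "(\<Sum>k<n. of_int (c k) * e k) = (\<Sum>k<n. of_int (d k) * e k)" "k < n"
  shows "c k = d k"
proof -
  have "(\<Sum>k<n. of_int (c k - d k) * e k) = 0"
    using assms(2) by (simp add: left_diff_distrib sum_subtractf)
  then show ?thesis
    using assms(1,3) unfolding is_Z_basis_def by fastforce
qed

lemma is_Q_basisI:
  assumes indep: "Q_lin_indep n e" and span: "\<And>x. \<exists>c. x = (\<Sum>k<n. of_rat (c k) * e k)"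
  shows "is_Q_basis n e"
  unfolding is_Q_basis_def
proof
  fix x
  obtain c where c: "x = (\<Sum>k<n. of_rat (c k) * e k)" using span by blast
  define c' where "c' k = (if k < n then c k else 0)" for k
  have c': "(\<Sum>k<n. of_rat (c' k) * e k) = (\<Sum>k<n. of_rat (c k) * e k)"
    by (rule sum.cong) (simp_all add: c'_def)
  show "\<exists>!c. (\<forall>k\<ge>n. c k = 0) \<and> x = (\<Sum>k<n. of_rat (c k) * e k)"
  proof (rule ex1I[of _ c'])
    show "(\<forall>k\<ge>n. c' k = 0) \<and> x = (\<Sum>k<n. of_rat (c' k) * e k)"
      using c c' by (simp add: c'_def)
  next
    fix d assume d: "(\<forall>k\<ge>n. d k = 0) \<and> x = (\<Sum>k<n. of_rat (d k) * e k)"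
    show "d = c'"
    proof
      fix k show "d k = c' k"
      proof (cases "k < n")
        case True
        then show ?thesis using Q_lin_indep_coeff_eq[OF indep, of d c' k] d c c' by simp
      qed (use d in \<open>simp add: c'_def\<close>)
    qed
  qed
qed

lemma is_Q_basis_spans:
  assumes "is_Q_basis n e"
  shows "\<exists>c. x = (\<Sum>k<n. of_rat (c k) * e k)"
  using assms unfolding is_Q_basis_def by (blast dest: ex1_implies_ex)

lemma Q_lin_indep_inj_on:
  assumes "Q_lin_indep n v"
  shows "inj_on v {..<n}"
proof (rule inj_onI, rule ccontr)
  fix i j assume ij: "i \<in> {..<n}" "j \<in> {..<n}" "v i = v j" "i \<noteq> j"
  define c :: "nat \<Rightarrow> rat" where "c = (\<lambda>k. if k = i then 1 else if k = j then -1 else 0)"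
  have "(\<Sum>k<n. of_rat (c k) * v k) = (\<Sum>k\<in>{i,j}. of_rat (c k) * v k)"
    by (rule sum.mono_neutral_right) (use ij in \<open>auto simp: c_def\<close>)
  also have "\<dots> = 0" using ij by (simp add: c_def)
  finally have "c i = 0" using assms ij unfolding Q_lin_indep_def by blast
  then show False by (simp add: c_def)
qed

lemma Q_lin_indep_is_Q_basis:
  fixes w v :: "nat \<Rightarrow> 'k::field_char_0"
  assumes w: "is_Q_basis n w" and v: "Q_lin_indep n v"
  shows "is_Q_basis n v"
proof -
  interpret V: vector_space "\<lambda>(c::rat) (x::'k). of_rat c * x"
    by unfold_locales (auto simp: algebra_simps of_rat_add of_rat_mult)
  have span_w: "V.span (w ` {..<n}) = UNIV"
  proof safe
    fix y :: 'k
    obtain c where "y = (\<Sum>k<n. of_rat (c k) * w k)" using is_Q_basis_spans[OF w] by blast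
    also have "\<dots> \<in> V.span (w ` {..<n})"
      by (intro V.span_sum V.span_scale V.span_base) auto
    finally show "y \<in> V.span (w ` {..<n})" .
  qed simp
  have inj: "inj_on v {..<n}" by (rule Q_lin_indep_inj_on[OF v])
  have indep: "V.independent (v ` {..<n})"
  proof
    assume "V.dependent (v ` {..<n})"
    then obtain c where c: "\<exists>y\<in>v ` {..<n}. c y \<noteq> 0" "(\<Sum>y\<in>v ` {..<n}. of_rat (c y) * y) = 0"
      using V.dependent_finite[of "v ` {..<n}"] by blast
    have "(\<Sum>k<n. of_rat (c (v k)) * v k) = 0" using c(2) by (simp add: sum.reindex[OF inj])
    then have "\<forall>k<n. c (v k) = 0"
      using v[unfolded Q_lin_indep_def, rule_format, of "\<lambda>k. c (v k)"] by blast
    with c(1) show False by auto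
  qed
  have "x \<in> V.span (v ` {..<n})" for x
  proof (rule ccontr)
    assume x: "x \<notin> V.span (v ` {..<n})"
    then have "x \<notin> v ` {..<n}" using V.span_base[of x "v ` {..<n}"] by blast
    then have "card (insert x (v ` {..<n})) = Suc n" by (simp add: card_image[OF inj])
    moreover have "card (insert x (v ` {..<n})) \<le> card (w ` {..<n})"
      using V.independent_span_bound[OF _ V.independent_insertI[OF x indep]] span_w by simp
    moreover have "card (w ` {..<n}) \<le> n" by (metis card_image_le card_lessThan finite_lessThan)
    ultimately show False by simp
  qed
  then have "\<exists>c. x = (\<Sum>k<n. of_rat (c k) * v k)" for x
    using V.span_finite[of "v ` {..<n}"] by (auto simp: sum.reindex[OF inj])
  with v show ?thesis by (rule is_Q_basisI)
qed

lemma rat_common_denominator: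
  "\<exists>D::int. D > 0 \<and> (\<exists>d::nat \<Rightarrow> int. \<forall>k<n. of_int (d k) = of_int D * (c k :: rat))"
proof (induction n)
  case 0 show ?case by (intro exI[of _ 1]) auto
next
  case (Suc n)
  then obtain D d where D: "D > 0" "\<forall>k<n. of_int (d k) = of_int D * c k" by blast
  obtain a b where ab: "quotient_of (c n) = (a, b)" by (cases "quotient_of (c n)")
  have b: "b > 0" and cn: "c n = of_int a / of_int b"
    using quotient_of_denom_pos[OF ab] quotient_of_div[OF ab] by auto
  show ?case
  proof (intro exI[of _ "D * b"] conjI exI[of _ "\<lambda>k. if k < n then d k * b else D * a"] allI impI)
    fix k assume "k < Suc n"
    then show "of_int (if k < n then d k * b else D * a) = of_int (D * b) * c k"
      using D b cn by (cases "k < n") (auto simp: less_Suc_eq)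
  qed (use D b in simp)
qed

lemma is_Z_basis_Q_lin_indep:
  fixes e :: "nat \<Rightarrow> 'k::field_char_0"
  assumes "is_Z_basis n S e"
  shows "Q_lin_indep n e"
  unfolding Q_lin_indep_def
proof (rule allI, rule impI)
  fix c :: "nat \<Rightarrow> rat" assume c0: "(\<Sum>k<n. of_rat (c k) * e k) = 0"
  obtain D d where D: "D > 0" "\<forall>k<n. of_int (d k) = of_int D * c k"
    using rat_common_denominator by blast
  have "(\<Sum>k<n. of_int (d k) * e k) = of_rat (of_int D) * (\<Sum>k<n. of_rat (c k) * e k)"
    unfolding sum_distrib_left
  proof (rule sum.cong)
    fix k assume "k \<in> {..<n}"
    then have "(of_int (d k) :: 'k) = of_rat (of_int D * c k)"
      using D by (metis lessThan_iff of_rat_of_int_eq)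
    then show "of_int (d k) * e k = of_rat (of_int D) * (of_rat (c k) * e k)"
      by (simp add: of_rat_mult)
  qed simp
  then have "\<forall>k<n. d k = 0" using assms c0 unfolding is_Z_basis_def by simp
  then show "\<forall>k<n. c k = 0" using D by force
qed

lemma is_Z_basis_mem:
  "is_Z_basis n S e \<Longrightarrow> (\<Sum>k<n. of_int (c k) * e k) \<in> S"
  unfolding is_Z_basis_def by blast

lemma is_Z_basis_basis_mem:
  assumes "is_Z_basis n S e" "i < n"
  shows "e i \<in> S"
proof -
  have "(\<Sum>k<n. of_int (if k = i then 1 else 0) * e k) = (\<Sum>k<n. if k = i then e k else 0)"
    by (rule sum.cong) auto
  also have "\<dots> = e i" using assms(2) by simp
  finally show ?thesis using is_Z_basis_mem[OF assms(1)] by metis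
qed

lemma zcoord_sum:
  assumes Z: "is_Z_basis n S e" and x: "x \<in> S"
  shows "x = (\<Sum>k<n. of_int (zcoord n e x k) * e k)"
proof -
  from Z x obtain c where c: "x = (\<Sum>k<n. of_int (c k) * e k)" unfolding is_Z_basis_def by blast
  define c' where "c' k = (if k < n then c k else 0)" for k
  have c'_sum: "(\<Sum>k<n. of_int (c' k) * e k) = (\<Sum>k<n. of_int (c k) * e k)"
    by (rule sum.cong) (simp_all add: c'_def)
  have "(\<forall>k\<ge>n. c' k = 0) \<and> x = (\<Sum>k<n. of_int (c' k) * e k)"
    using c c'_sum by (simp add: c'_def)
  moreover have "d = c'" if "(\<forall>k\<ge>n. d k = 0) \<and> x = (\<Sum>k<n. of_int (d k) * e k)" for d
  proof
    fix k show "d k = c' k"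
      using that c c'_sum is_Z_basis_coeff_eq[OF Z, of d c' k] by (cases "k < n") (auto simp: c'_def)
  qed
  ultimately have "zcoord n e x = c'"
    unfolding zcoord_def by (rule the_equality)
  then show ?thesis using c c'_sum by simp
qed

definition qcoord :: "nat \<Rightarrow> (nat \<Rightarrow> 'k::field_char_0) \<Rightarrow> 'k \<Rightarrow> nat \<Rightarrow> rat" where
  "qcoord n e x = (THE c. (\<forall>k\<ge>n. c k = 0) \<and> x = (\<Sum>k<n. of_rat (c k) * e k))"

lemma qcoord_sum:
  assumes "is_Q_basis n e"
  shows "x = (\<Sum>k<n. of_rat (qcoord n e x k) * e k)"
proof -
  have "\<exists>!c. (\<forall>k\<ge>n. c k = 0) \<and> x = (\<Sum>k<n. of_rat (c k) * e k)"
    using assms unfolding is_Q_basis_def by (rule spec)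
  from theI'[OF this] show ?thesis unfolding qcoord_def by (rule conjunct2)
qed

lemma qcoord_eqI:
  assumes basis: "is_Q_basis n e" and x: "x = (\<Sum>k<n. of_rat (c k) * e k)" and k: "k < n"
  shows "qcoord n e x k = c k"
proof -
  let ?P = "\<lambda>c. (\<forall>k\<ge>n. c k = 0) \<and> x = (\<Sum>k<n. of_rat (c k) * e k)"
  define c' where "c' k = (if k < n then c k else 0)" for k
  have "(\<Sum>k<n. of_rat (c' k) * e k) = (\<Sum>k<n. of_rat (c k) * e k)"
    by (rule sum.cong) (simp_all add: c'_def)
  then have c': "?P c'" using x by (simp add: c'_def)
  have "\<exists>!c. ?P c" using basis unfolding is_Q_basis_def by (rule spec)
  then have "qcoord n e x = c'" unfolding qcoord_def using c' by (rule the1_equality[of ?P])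
  then show ?thesis using k by (simp add: c'_def)
qed

lemma qcoord_basis:
  assumes "is_Q_basis n e" "j < n" "k < n"
  shows "qcoord n e (e j) k = (if k = j then 1 else 0)"
proof (rule qcoord_eqI[OF assms(1) _ assms(3)])
  have "(\<Sum>k<n. of_rat (if k = j then 1 else 0) * e k) = (\<Sum>k<n. if k = j then e k else 0)"
    by (rule sum.cong) auto
  also have "\<dots> = e j" using assms(2) by simp
  finally show "e j = (\<Sum>k<n. of_rat (if k = j then 1 else 0) * e k)" ..
qed

lemma qcoord_zcoord:
  assumes "is_Q_basis n e" "is_Z_basis n S e" "x \<in> S" "k < n"
  shows "qcoord n e x k = of_int (zcoord n e x k)"
  using qcoord_eqI[OF assms(1) _ assms(4), of x "\<lambda>k. of_int (zcoord n e x k)"]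
    zcoord_sum[OF assms(2,3)] by simp

section \<open>Rational linear forms\<close>

definition rat_linear :: "('k::field_char_0 \<Rightarrow> rat) \<Rightarrow> bool" where
  "rat_linear \<phi> \<longleftrightarrow> (\<forall>x y. \<phi> (x + y) = \<phi> x + \<phi> y) \<and> (\<forall>c x. \<phi> (of_rat c * x) = c * \<phi> x)"

lemma rat_linear_add: "rat_linear \<phi> \<Longrightarrow> \<phi> (x + y) = \<phi> x + \<phi> y"
  by (simp add: rat_linear_def)

lemma rat_linear_scale: "rat_linear \<phi> \<Longrightarrow> \<phi> (of_rat c * x) = c * \<phi> x"
  by (simp add: rat_linear_def)

lemma rat_linear_zero: "rat_linear \<phi> \<Longrightarrow> \<phi> 0 = 0"
  using rat_linear_scale[of \<phi> 0 0] by simp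

lemma rat_linear_diff: "rat_linear \<phi> \<Longrightarrow> \<phi> (x - y) = \<phi> x - \<phi> y"
  using rat_linear_add[of \<phi> "x - y" y] by simp

lemma rat_linear_sum:
  "rat_linear \<phi> \<Longrightarrow> \<phi> (\<Sum>k\<in>A. of_rat (c k) * v k) = (\<Sum>k\<in>A. c k * \<phi> (v k))"
  by (induction A rule: infinite_finite_induct) (simp_all add: rat_linear_zero rat_linear_add rat_linear_scale)

lemma rat_linear_mult_right:
  assumes "rat_linear \<phi>"
  shows "rat_linear (\<lambda>y. \<phi> (y * z))"
  using assms unfolding rat_linear_def by (simp add: distrib_right mult.assoc)

lemma rat_linear_lincomb:
  assumes "\<And>i. i \<in> I \<Longrightarrow> rat_linear (\<phi> i)"
  shows "rat_linear (\<lambda>x. \<Sum>i\<in>I. \<phi> i x * a i)"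
  using assms unfolding rat_linear_def
  by (simp add: distrib_right sum.distrib sum_distrib_left mult.assoc)

lemma rat_linear_qcoord:
  assumes basis: "is_Q_basis n e" and k: "k < n"
  shows "rat_linear (\<lambda>x. qcoord n e x k)"
  unfolding rat_linear_def
proof (intro conjI allI)
  fix x y
  have "x + y = (\<Sum>k<n. of_rat (qcoord n e x k + qcoord n e y k) * e k)"
    by (subst qcoord_sum[OF basis, of x], subst qcoord_sum[OF basis, of y])
      (simp add: of_rat_add distrib_right sum.distrib)
  then show "qcoord n e (x + y) k = qcoord n e x k + qcoord n e y k"
    by (rule qcoord_eqI[OF basis _ k])
next
  fix c x
  have "of_rat c * x = (\<Sum>k<n. of_rat (c * qcoord n e x k) * e k)"
    by (subst qcoord_sum[OF basis, of x]) (simp add: of_rat_mult sum_distrib_left mult.assoc)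
  then show "qcoord n e (of_rat c * x) k = c * qcoord n e x k"
    by (rule qcoord_eqI[OF basis _ k])
qed

lemma rat_linear_kernel_spanned:
  fixes u w :: "nat \<Rightarrow> 'k::field_char_0"
  assumes w: "is_Q_basis (Suc m) w" and u: "Q_lin_indep m u" and \<psi>: "rat_linear \<psi>"
    and \<psi>u: "\<And>k. k < m \<Longrightarrow> \<psi> (u k) = 0" and \<psi>y: "\<psi> y = 1" and x: "\<psi> x = 0"
  shows "\<exists>c. x = (\<Sum>k<m. of_rat (c k) * u k)"
proof -
  define v where "v = u(m := y)"
  have v_sum: "(\<Sum>k<Suc m. of_rat (c k) * v k) = (\<Sum>k<m. of_rat (c k) * u k) + of_rat (c m) * y"
    for c
    unfolding sum.lessThan_Suc by (simp add: v_def)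
  have \<psi>v: "\<psi> (\<Sum>k<Suc m. of_rat (c k) * v k) = c m" for c
    unfolding v_sum using \<psi>u \<psi>y
    by (simp add: rat_linear_add[OF \<psi>] rat_linear_scale[OF \<psi>] rat_linear_sum[OF \<psi>])
  have "Q_lin_indep (Suc m) v"
    unfolding Q_lin_indep_def
  proof (rule allI, rule impI)
    fix c assume c: "(\<Sum>k<Suc m. of_rat (c k) * v k) = 0"
    then have "c m = 0" using \<psi>v[of c] rat_linear_zero[OF \<psi>] by simp
    then have "(\<Sum>k<m. of_rat (c k) * u k) = 0" using c unfolding v_sum by simp
    with \<open>c m = 0\<close> show "\<forall>k<Suc m. c k = 0"
      using u unfolding Q_lin_indep_def by (auto simp: less_Suc_eq)
  qed
  then have v: "is_Q_basis (Suc m) v" by (rule Q_lin_indep_is_Q_basis[OF w])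
  define c where "c = qcoord (Suc m) v x"
  have x_sum: "x = (\<Sum>k<Suc m. of_rat (c k) * v k)" unfolding c_def by (rule qcoord_sum[OF v])
  then have "c m = 0" using \<psi>v[of c] x by simp
  then show ?thesis using x_sum unfolding v_sum by auto
qed

lemma rat_linear_proportional:
  fixes u w :: "nat \<Rightarrow> 'k::field_char_0"
  assumes w: "is_Q_basis (Suc m) w" and u: "Q_lin_indep m u" and \<psi>: "rat_linear \<psi>"
    and \<psi>u: "\<And>k. k < m \<Longrightarrow> \<psi> (u k) = 0" and \<psi>y: "\<psi> y = 1"
    and F: "rat_linear F" and Fu: "\<And>k. k < m \<Longrightarrow> F (u k) = 0"
  shows "F x = \<psi> x * F y"
proof -
  have "\<psi> (x - of_rat (\<psi> x) * y) = 0"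
    using \<psi>y by (simp add: rat_linear_diff[OF \<psi>] rat_linear_scale[OF \<psi>])
  then obtain c where c: "x - of_rat (\<psi> x) * y = (\<Sum>k<m. of_rat (c k) * u k)"
    using rat_linear_kernel_spanned[OF w u \<psi> \<psi>u \<psi>y] by blast
  have "F (x - of_rat (\<psi> x) * y) = 0"
    unfolding c rat_linear_sum[OF F] using Fu by simp
  then show ?thesis by (simp add: rat_linear_diff[OF F] rat_linear_scale[OF F])
qed

text \<open>Multiplication by \<open>x\<close> preserves \<open>ker \<psi>\<close>, so it acts on the quotient line by a rational
  \<open>l\<close>; if \<open>x \<noteq> l\<close>, then \<open>x - l\<close> is invertible and maps some \<open>z\<close> to \<open>y \<notin> ker \<psi>\<close>.\<close>

lemma rat_linear_multiplier_rational:
  fixes u w :: "nat \<Rightarrow> 'k::field_char_0"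
  assumes w: "is_Q_basis (Suc m) w" and u: "Q_lin_indep m u" and \<psi>: "rat_linear \<psi>"
    and \<psi>u: "\<And>k. k < m \<Longrightarrow> \<psi> (u k) = 0" and \<psi>y: "\<psi> y = 1"
    and x: "\<And>k. k < m \<Longrightarrow> \<psi> (u k * x) = 0"
  shows "x \<in> \<rat>"
proof (rule ccontr)
  assume irrational: "x \<notin> \<rat>"
  define l where "l = \<psi> (y * x)"
  have \<psi>x: "\<psi> (z * x) = \<psi> z * l" for z
    unfolding l_def
    by (rule rat_linear_proportional[OF w u \<psi> \<psi>u \<psi>y rat_linear_mult_right[OF \<psi>] x])
  define z where "z = y / (x - of_rat l)"
  have "x - of_rat l \<noteq> 0" using irrational by (auto simp: Rats_def)
  then have "(x - of_rat l) * z = y" by (simp add: z_def)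
  then have "y = z * x - of_rat l * z" by (simp add: algebra_simps)
  then have "\<psi> y = \<psi> (z * x) - l * \<psi> z"
    by (simp add: rat_linear_diff[OF \<psi>] rat_linear_scale[OF \<psi>])
  then have "\<psi> y = 0" by (simp add: \<psi>x)
  with \<psi>y show False by simp
qed

section \<open>The determinant form\<close>

lemma detn_eq_det: "detn n M = det (mat n n (\<lambda>(i, j). M i j))"
  unfolding detn_def
  by (subst det_def'[of _ n]) (auto intro!: sum.cong prod.cong simp: atLeast0LessThan)

text \<open>The form \<open>a\<close> of the paper extended \<open>\<rat>\<close>-linearly to the whole field: the last column of
  the determinant holds the rational instead of the integral coordinates of the argument.\<close>

definition form_ext_mat :: "nat \<Rightarrow> (nat \<Rightarrow> 'k::field_char_0) \<Rightarrow> (nat \<Rightarrow> 'k) \<Rightarrow> 'k \<Rightarrow> 'k \<Rightarrow> rat mat"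
  where "form_ext_mat r e u h x = mat (r+2) (r+2)
    (\<lambda>(i, k). if k \<le> r then of_int (zcoord (r+2) e (u k * h) i) else qcoord (r+2) e x i)"

definition form_ext :: "nat \<Rightarrow> (nat \<Rightarrow> 'k::field_char_0) \<Rightarrow> (nat \<Rightarrow> 'k) \<Rightarrow> 'k \<Rightarrow> 'k \<Rightarrow> rat"
  where "form_ext r e u h x = det (form_ext_mat r e u h x) / of_int (lam r e u h)"

lemma form_ext_mat_carrier: "form_ext_mat r e u h x \<in> carrier_mat (r+2) (r+2)"
  by (simp add: form_ext_mat_def)

lemma det_form_ext_mat_expand:
  "det (form_ext_mat r e u h x)
    = (\<Sum>i<r+2. qcoord (r+2) e x i * cofactor (form_ext_mat r e u h 0) i (r+1))"
proof -
  have "mat_delete (form_ext_mat r e u h x) i (r+1) = mat_delete (form_ext_mat r e u h 0) i (r+1)"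
    for i by (rule eq_matI) (auto simp: mat_delete_def form_ext_mat_def)
  then show ?thesis
    by (simp add: laplace_expansion_column[OF form_ext_mat_carrier, of "r+1"] cofactor_def)
      (simp add: form_ext_mat_def)
qed

lemma rat_linear_form_ext:
  assumes "is_Q_basis (r+2) e"
  shows "rat_linear (form_ext r e u h)"
proof -
  let ?c = "\<lambda>i. cofactor (form_ext_mat r e u h 0) i (r+1) / of_int (lam r e u h)"
  have eq: "form_ext r e u h = (\<lambda>x. \<Sum>i<r+2. qcoord (r+2) e x i * ?c i)"
    by (rule ext, unfold form_ext_def det_form_ext_mat_expand sum_divide_distrib)
      (simp only: times_divide_eq_right)
  have "rat_linear (\<lambda>x. \<Sum>i<r+2. qcoord (r+2) e x i * ?c i)"
    by (intro rat_linear_lincomb rat_linear_qcoord[OF assms]) simp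
  then show ?thesis unfolding eq .
qed

lemma form_a_eq_form_ext:
  assumes Q: "is_Q_basis (r+2) e" and Z: "is_Z_basis (r+2) S e" and x: "x \<in> S"
  shows "form_a r e u h x = form_ext r e u h x"
proof -
  let ?M = "\<lambda>i k. if k \<le> r then zcoord (r+2) e (u k * h) i else zcoord (r+2) e x i"
  have "form_ext_mat r e u h x = map_mat of_int (mat (r+2) (r+2) (\<lambda>(i, k). ?M i k))"
    using qcoord_zcoord[OF Q Z x] by (intro eq_matI) (auto simp: form_ext_mat_def)
  then have "det (form_ext_mat r e u h x) = of_int (detn (r+2) ?M)"
    by (simp add: detn_eq_det of_int_hom.hom_det)
  then show ?thesis by (simp add: form_a_def form_ext_def)
qed

lemma form_ext_vanishes:
  assumes Q: "is_Q_basis (r+2) e" and Z: "is_Z_basis (r+2) S e"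
    and k: "k \<le> r" and S: "u k * h \<in> S"
  shows "form_ext r e u h (u k * h) = 0"
proof -
  have "col (form_ext_mat r e u h (u k * h)) k = col (form_ext_mat r e u h (u k * h)) (r+1)"
    using k qcoord_zcoord[OF Q Z S] by (intro eq_vecI) (auto simp: form_ext_mat_def)
  then have "det (form_ext_mat r e u h (u k * h)) = 0"
    using k by (intro det_identical_columns[OF form_ext_mat_carrier, of k "r+1"]) auto
  then show ?thesis by (simp add: form_ext_def)
qed

text \<open>The coordinates of the \<open>u\<^sub>j h\<close> are triangular, so the determinant at the last basis
  vector is the product \<open>\<lambda>\<close> of their diagonal entries.\<close>

lemma form_ext_last_basis:
  assumes Q: "is_Q_basis (r+2) e"
    and tri: "\<forall>j\<le>r. (\<forall>k. j < k \<longrightarrow> zcoord (r+2) e (u j * h) k = 0) \<and> zcoord (r+2) e (u j * h) j > 0"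
  shows "form_ext r e u h (e (r+1)) = 1"
proof -
  let ?A = "form_ext_mat r e u h (e (r+1))"
  have last: "qcoord (r+2) e (e (r+1)) i = (if i = r+1 then 1 else 0)" if "i < r+2" for i
    using qcoord_basis[OF Q _ that, of "r+1"] by simp
  have diag: "?A $$ (i, i) = of_int (zcoord (r+2) e (u i * h) i)" if "i \<le> r" for i
    using that by (simp add: form_ext_mat_def)
  have "upper_triangular ?A"
    unfolding upper_triangular_def using tri last by (auto simp: form_ext_mat_def)
  then have "det ?A = (\<Prod>i = 0..<r+2. ?A $$ (i, i))"
    using form_ext_mat_carrier[of r e u h "e (r+1)"]
    by (simp add: det_upper_triangular prod_list_diag_prod)
  also have "\<dots> = (\<Prod>i = 0..<r+1. ?A $$ (i, i)) * ?A $$ (r+1, r+1)"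
    by simp
  also have "?A $$ (r+1, r+1) = 1"
    using last[of "r+1"] by (simp add: form_ext_mat_def)
  also have "(\<Prod>i = 0..<r+1. ?A $$ (i, i)) = of_int (lam r e u h)"
    unfolding lam_def of_int_prod by (rule prod.cong) (use diag in auto)
  finally have "det ?A = of_int (lam r e u h)" by simp
  moreover have "lam r e u h > 0" unfolding lam_def using tri by (intro prod_pos) auto
  ultimately show ?thesis by (simp add: form_ext_def)
qed

section \<open>Smith normal form\<close>

lemma det_mat_diag: "det (mat_diag n f) = (\<Prod>i<n. f i)"
proof -
  have "upper_triangular (mat_diag n f)" by (simp add: upper_triangular_def mat_diag_def)
  then have "det (mat_diag n f) = prod_list (diag_mat (mat_diag n f))"
    by (rule det_upper_triangular[OF _ mat_diag_dim])
  also have "\<dots> = (\<Prod>i<n. f i)"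
    by (simp add: prod_list_diag_prod mat_diag_def atLeast0LessThan)
  finally show ?thesis .
qed

lemma smult_mat_cancel:
  fixes A B :: "'a::field mat"
  assumes "A \<in> carrier_mat n m" "B \<in> carrier_mat n m" "c \<noteq> 0" "c \<cdot>\<^sub>m A = c \<cdot>\<^sub>m B"
  shows "A = B"
proof (rule eq_matI)
  fix i j assume "i < dim_row B" "j < dim_col B"
  then have "(c \<cdot>\<^sub>m A) $$ (i, j) = c * A $$ (i, j)" "(c \<cdot>\<^sub>m B) $$ (i, j) = c * B $$ (i, j)"
    using assms(1,2) by auto
  then show "A $$ (i, j) = B $$ (i, j)" using assms(3,4) by simp
qed (use assms(1,2) in auto)

lemma mat_mult_smult_one_commute:
  fixes A B :: "'a::field mat"
  assumes A: "A \<in> carrier_mat n n" and B: "B \<in> carrier_mat n n" and c: "c \<noteq> 0"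
    and AB: "A * B = c \<cdot>\<^sub>m 1\<^sub>m n"
  shows "B * A = c \<cdot>\<^sub>m 1\<^sub>m n"
proof -
  have cB: "(1 / c) \<cdot>\<^sub>m B \<in> carrier_mat n n" using B by simp
  have one: "(1 / c) \<cdot>\<^sub>m (c \<cdot>\<^sub>m 1\<^sub>m n) = 1\<^sub>m n" using c by (intro eq_matI) simp_all
  have "A * ((1 / c) \<cdot>\<^sub>m B) = 1\<^sub>m n"
    unfolding mult_smult_distrib[OF A B] AB one ..
  then have BA: "((1 / c) \<cdot>\<^sub>m B) * A = 1\<^sub>m n"
    by (rule mat_mult_left_right_inverse[OF A cB])
  have "(1 / c) \<cdot>\<^sub>m (B * A) = ((1 / c) \<cdot>\<^sub>m B) * A"
    by (rule mult_smult_assoc_mat[OF B A, symmetric])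
  also have "\<dots> = (1 / c) \<cdot>\<^sub>m (c \<cdot>\<^sub>m 1\<^sub>m n)" unfolding BA one ..
  finally show ?thesis
    using A B c by (intro smult_mat_cancel[of "B * A" n n "c \<cdot>\<^sub>m 1\<^sub>m n" "1 / c"]) simp_all
qed

lemma mult_mat_Ints:
  assumes "A \<in> carrier_mat n m" "B \<in> carrier_mat m l"
    and "\<And>i j. i < n \<Longrightarrow> j < m \<Longrightarrow> A $$ (i, j) \<in> \<int>"
    and "\<And>i j. i < m \<Longrightarrow> j < l \<Longrightarrow> B $$ (i, j) \<in> \<int>"
    and "i < n" "j < l"
  shows "(A * B) $$ (i, j) \<in> \<int>"
  using assms by (auto simp: scalar_prod_def intro!: Ints_sum Ints_mult)

lemma index_mult_mat3:
  assumes "A \<in> carrier_mat n n" "B \<in> carrier_mat n n" "C \<in> carrier_mat n n" "i < n" "j < n"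
  shows "(A * B * C) $$ (i, j) = (\<Sum>k<n. \<Sum>l<n. A $$ (i, k) * B $$ (k, l) * C $$ (l, j))"
proof -
  have "(A * B * C) $$ (i, j) = (\<Sum>k<n. A $$ (i, k) * (\<Sum>l<n. B $$ (k, l) * C $$ (l, j)))"
    using assms by (simp add: scalar_prod_def atLeast0LessThan)
  then show ?thesis by (simp add: sum_distrib_left mult.assoc)
qed

text \<open>If \<open>P M Q = diag(d\<^sub>0, \<dots>, d\<^sub>n\<^sub>-\<^sub>1)\<close> with \<open>d\<^sub>i | t\<close>, then \<open>t M\<^sup>-\<^sup>1 = Q diag(t/d\<^sub>0, \<dots>) P\<close>.\<close>

lemma smith_scaled_inverse_Ints:
  fixes P M Q B :: "rat mat" and d :: "nat \<Rightarrow> int"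
  assumes P: "P \<in> carrier_mat n n" and M: "M \<in> carrier_mat n n"
    and Q: "Q \<in> carrier_mat n n" and B: "B \<in> carrier_mat n n"
    and P_Ints: "\<And>i j. i < n \<Longrightarrow> j < n \<Longrightarrow> P $$ (i, j) \<in> \<int>"
    and Q_Ints: "\<And>i j. i < n \<Longrightarrow> j < n \<Longrightarrow> Q $$ (i, j) \<in> \<int>"
    and smith: "P * M * Q = mat_diag n (\<lambda>i. of_int (d i))"
    and dvd: "\<And>i. i < n \<Longrightarrow> d i dvd t" and t: "t \<noteq> 0"
    and inverse: "M * B = of_int t \<cdot>\<^sub>m 1\<^sub>m n"
    and ij: "i < n" "j < n"
  shows "B $$ (i, j) \<in> \<int>"
proof -
  define E where "E = mat_diag n (\<lambda>i. of_int (t div d i) :: rat)"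
  define X where "X = Q * E * P"
  have E: "E \<in> carrier_mat n n" by (simp add: E_def)
  have X: "X \<in> carrier_mat n n" using Q E P by (simp add: X_def)
  have "of_int (d i) * of_int (t div d i) = (of_int t :: rat)" if "i < n" for i
    using dvd_mult_div_cancel[OF dvd[OF that]] by (metis of_int_mult)
  then have "mat_diag n (\<lambda>i. of_int (d i)) * E = of_int t \<cdot>\<^sub>m 1\<^sub>m n"
    unfolding E_def mat_diag_diag by (intro eq_matI) (auto simp: mat_diag_def)
  then have "(P * M) * (Q * E) = of_int t \<cdot>\<^sub>m 1\<^sub>m n"
    using P M Q E unfolding smith[symmetric] by (simp add: assoc_mult_mat[of _ n n _ n _ n])
  then have "(Q * E) * (P * M) = of_int t \<cdot>\<^sub>m 1\<^sub>m n"
    using P M Q E t by (intro mat_mult_smult_one_commute[of "P * M" n "Q * E"]) simp_all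
  then have XM: "X * M = of_int t \<cdot>\<^sub>m 1\<^sub>m n"
    using P M Q E by (simp add: X_def assoc_mult_mat[of _ n n _ n _ n])
  have "of_int t \<cdot>\<^sub>m B = (of_int t \<cdot>\<^sub>m 1\<^sub>m n) * B"
    using B by (simp add: mult_smult_assoc_mat[of _ n n])
  also have "\<dots> = X * (M * B)" unfolding XM[symmetric] using X M B by (rule assoc_mult_mat)
  also have "\<dots> = of_int t \<cdot>\<^sub>m X"
    unfolding inverse mult_smult_distrib[OF X one_carrier_mat] using X by simp
  finally have "B = X" using t B X by (intro smult_mat_cancel[of B n n X "of_int t"]) simp_all
  have E_Ints: "E $$ (k, l) \<in> \<int>" if "k < n" "l < n" for k l
    using that by (simp add: E_def mat_diag_def)
  have QE_Ints: "(Q * E) $$ (k, l) \<in> \<int>" if "k < n" "l < n" for k l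
    by (rule mult_mat_Ints[OF Q E Q_Ints E_Ints that])
  have "X $$ (i, j) \<in> \<int>"
    unfolding X_def using Q E by (intro mult_mat_Ints[OF _ P QE_Ints P_Ints ij]) simp
  with \<open>B = X\<close> show ?thesis by simp
qed

lemma elem_divisors_mat:
  fixes M :: "nat \<Rightarrow> nat \<Rightarrow> rat"
  assumes "elem_divisors n M d"
  obtains P Q :: "rat mat" where "P \<in> carrier_mat n n" "Q \<in> carrier_mat n n"
    "\<And>i j. i < n \<Longrightarrow> j < n \<Longrightarrow> P $$ (i, j) \<in> \<int>" "\<And>i j. i < n \<Longrightarrow> j < n \<Longrightarrow> Q $$ (i, j) \<in> \<int>"
    "det P \<noteq> 0" "det Q \<noteq> 0" "P * mat n n (\<lambda>(i, j). M i j) * Q = mat_diag n (\<lambda>i. of_int (d i))"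
proof -
  define int_mat :: "(nat \<Rightarrow> nat \<Rightarrow> int) \<Rightarrow> rat mat"
    where "int_mat X = mat n n (\<lambda>(i, j). of_int (X i j))" for X
  let ?M = "mat n n (\<lambda>(i, j). M i j)"
  obtain P Q where P: "detn n P \<in> {1, -1}" and Q: "detn n Q \<in> {1, -1}"
    and smith: "\<forall>i<n. \<forall>j<n. (\<Sum>k<n. \<Sum>l<n. of_int (P i k) * M k l * of_int (Q l j))
                                  = (if i = j then of_int (d i) else 0)"
    using assms unfolding elem_divisors_def by blast
  have carrier: "int_mat X \<in> carrier_mat n n" "?M \<in> carrier_mat n n" for X
    by (simp_all add: int_mat_def)
  have det_int_mat: "det (int_mat X) = of_int (detn n X)" for X
  proof -
    have "int_mat X = map_mat of_int (mat n n (\<lambda>(i, j). X i j))"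
      by (rule eq_matI) (auto simp: int_mat_def)
    then show ?thesis by (simp add: detn_eq_det of_int_hom.hom_det)
  qed
  have "(int_mat P * ?M * int_mat Q) $$ (i, j)
      = (\<Sum>k<n. \<Sum>l<n. of_int (P i k) * M k l * of_int (Q l j))" if "i < n" "j < n" for i j
    unfolding index_mult_mat3[OF carrier(1) carrier(2) carrier(1) that]
    by (rule sum.cong[OF refl], rule sum.cong[OF refl]) (use that in \<open>simp add: int_mat_def\<close>)
  then have "int_mat P * ?M * int_mat Q = mat_diag n (\<lambda>i. of_int (d i))"
    using smith by (intro eq_matI) (auto simp: int_mat_def mat_diag_def)
  moreover have "det (int_mat P) \<noteq> 0" "det (int_mat Q) \<noteq> 0" using P Q by (auto simp: det_int_mat)
  ultimately show ?thesis using carrier by (intro that[of "int_mat P" "int_mat Q"]) (auto simp: int_mat_def)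
qed

lemma elem_divisors_dvd_last:
  assumes "elem_divisors (Suc n) M d" "i \<le> n"
  shows "d i dvd d n"
proof -
  have chain: "\<forall>i. Suc i < Suc n \<longrightarrow> d i dvd d (Suc i)"
    using assms(1) unfolding elem_divisors_def by blast
  from assms(2) show ?thesis
    by (induction n rule: dec_induct) (use chain in \<open>auto intro: dvd_trans\<close>)
qed

lemma elem_divisors_scaled_inverse_Ints:
  fixes M B :: "nat \<Rightarrow> nat \<Rightarrow> rat" and d :: "nat \<Rightarrow> int"
  assumes ed: "elem_divisors (Suc n) M d"
    and det: "det (mat (Suc n) (Suc n) (\<lambda>(i, j). M i j)) \<noteq> 0"
    and inverse: "\<And>i j. i < Suc n \<Longrightarrow> j < Suc n \<Longrightarrow>
        (\<Sum>k<Suc n. M i k * B k j) = (if i = j then of_int (d n) else 0)"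
  shows "d n \<noteq> 0" and "\<And>i j. i < Suc n \<Longrightarrow> j < Suc n \<Longrightarrow> B i j \<in> \<int>"
proof -
  let ?N = "Suc n"
  define Mm where "Mm = mat ?N ?N (\<lambda>(i, j). M i j)"
  define Bm where "Bm = mat ?N ?N (\<lambda>(i, j). B i j)"
  have Mm: "Mm \<in> carrier_mat ?N ?N" and Bm: "Bm \<in> carrier_mat ?N ?N"
    by (simp_all add: Mm_def Bm_def)
  obtain P Q where P: "P \<in> carrier_mat ?N ?N" and Q: "Q \<in> carrier_mat ?N ?N"
    and Ints: "\<And>i j. i < ?N \<Longrightarrow> j < ?N \<Longrightarrow> P $$ (i, j) \<in> \<int>"
      "\<And>i j. i < ?N \<Longrightarrow> j < ?N \<Longrightarrow> Q $$ (i, j) \<in> \<int>"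
    and dets: "det P \<noteq> 0" "det Q \<noteq> 0" and smith: "P * Mm * Q = mat_diag ?N (\<lambda>i. of_int (d i))"
    using elem_divisors_mat[OF ed] unfolding Mm_def by metis
  have "(\<Prod>i<?N. of_int (d i) :: rat) = det P * det Mm * det Q"
    unfolding det_mat_diag[symmetric] smith[symmetric]
    by (simp add: det_mult[OF mult_carrier_mat[OF P Mm] Q] det_mult[OF P Mm])
  also have "\<dots> \<noteq> 0" using dets det by (simp add: Mm_def)
  finally show d_nonzero: "d n \<noteq> 0" by simp
  have "Mm * Bm = of_int (d n) \<cdot>\<^sub>m 1\<^sub>m ?N"
    using inverse by (intro eq_matI) (auto simp: Mm_def Bm_def scalar_prod_def atLeast0LessThan)
  then have "Bm $$ (i, j) \<in> \<int>" if "i < ?N" "j < ?N" for i j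
    using P Mm Q Bm Ints smith elem_divisors_dvd_last[OF ed] d_nonzero that
    by (intro smith_scaled_inverse_Ints[of P ?N Mm Q Bm d "d n"]) auto
  then show "B i j \<in> \<int>" if "i < ?N" "j < ?N" for i j
    using that by (simp add: Bm_def)
qed

section \<open>Algebraic integers\<close>

lemma one_in_O_K: "1 \<in> O_K"
  unfolding O_K_def alg_int_def by (intro CollectI exI[of _ "[:-1, 1:]"]) simp

text \<open>The matrix of multiplication by \<open>z\<close> in a \<open>\<int>\<close>-basis of \<open>S\<close> is integral and has \<open>z\<close> as an
  eigenvalue, so \<open>z\<close> is a root of its monic integral characteristic polynomial.\<close>

lemma alg_int_if_lattice_stable:
  fixes z :: "'k::field_char_0"
  assumes Z: "is_Z_basis n S e" and i: "i < n" "e i \<noteq> 0"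
    and stable: "\<And>y. y \<in> S \<Longrightarrow> z * y \<in> S"
  shows "alg_int z"
proof -
  define Mz where "Mz = mat n n (\<lambda>(i, j). zcoord n e (z * e i) j)"
  define v where "v = vec n e"
  have Mz: "Mz \<in> carrier_mat n n" by (simp add: Mz_def)
  have "map_mat of_int Mz *\<^sub>v v = z \<cdot>\<^sub>v v"
  proof (rule eq_vecI)
    fix i assume "i < dim_vec (z \<cdot>\<^sub>v v)"
    then have i: "i < n" by (simp add: v_def)
    have "z * e i = (\<Sum>j<n. of_int (zcoord n e (z * e i) j) * e j)"
      by (rule zcoord_sum[OF Z stable[OF is_Z_basis_basis_mem[OF Z i]]])
    then show "(map_mat of_int Mz *\<^sub>v v) $ i = (z \<cdot>\<^sub>v v) $ i"
      using i by (simp add: Mz_def v_def scalar_prod_def atLeast0LessThan)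
  qed (simp add: Mz_def v_def)
  moreover have "v \<noteq> 0\<^sub>v n" using i by (auto simp: v_def dest!: arg_cong[where f = "\<lambda>v. v $ i"])
  moreover have "v \<in> carrier_vec n" by (simp add: v_def)
  ultimately have "eigenvector (map_mat of_int Mz) v z" unfolding eigenvector_def using Mz by simp
  then have "eigenvalue (map_mat of_int Mz) z" unfolding eigenvalue_def by blast
  then have "poly (map_poly of_int (char_poly Mz)) z = 0"
    using Mz by (simp add: eigenvalue_root_char_poly[of _ n] of_int_hom.char_poly_hom)
  moreover have "lead_coeff (char_poly Mz) = 1" using degree_monic_char_poly[OF Mz] by simp
  ultimately show ?thesis unfolding alg_int_def by blast
qed

lemma ideal_mult_O_K_stable:
  assumes f: "int_ideal f" and z: "z \<in> O_K" and y: "y \<in> ideal_mult f J"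
  shows "z * y \<in> ideal_mult f J"
proof -
  obtain n :: nat and x w where y_sum: "y = (\<Sum>i<n. x i * w i)" and xw: "\<forall>i<n. x i \<in> f \<and> w i \<in> J"
    using y unfolding ideal_mult_def by blast
  have "z * y = (\<Sum>i<n. (z * x i) * w i)" unfolding y_sum sum_distrib_left by (simp add: mult.assoc)
  moreover have "\<forall>i<n. z * x i \<in> f \<and> w i \<in> J" using xw f z unfolding int_ideal_def by blast
  ultimately show ?thesis
    unfolding ideal_mult_def by (intro CollectI exI[of _ n] exI[of _ "\<lambda>i. z * x i"] exI[of _ w]) simp
qed

lemma O_K_mult_closed:
  fixes z y :: "'k::field_char_0" and L :: "'k set"
  assumes Z: "is_Z_basis n L e" and i: "i < n" "e i \<noteq> 0"
    and stable: "\<And>z y. z \<in> O_K \<Longrightarrow> y \<in> L \<Longrightarrow> z * y \<in> L"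
    and z: "z \<in> O_K" and y: "y \<in> O_K"
  shows "z * y \<in> O_K"
proof -
  have "alg_int (z * y)"
  proof (rule alg_int_if_lattice_stable[OF Z i])
    show "z * y * x \<in> L" if "x \<in> L" for x
      using stable that z y by (simp add: mult.assoc)
  qed
  then show ?thesis unfolding O_K_def by simp
qed

section \<open>The lattice data\<close>

text \<open>The data attached in the paper to a lattice \<open>S\<close> with base point \<open>h\<close>, instantiated with
  \<open>(L, h')\<close> and with \<open>(\<O>\<^sub>K, 1)\<close>; \<open>\<phi>\<close> is the form \<open>a\<close>.\<close>

locale lattice_basis =
  fixes r :: nat and \<sigma> :: "nat \<Rightarrow> 'k::field_char_0 \<Rightarrow> complex" and u :: "nat \<Rightarrow> 'k"
    and S :: "'k set" and h :: 'k and e :: "nat \<Rightarrow> 'k"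
    and A :: "nat \<Rightarrow> int" and t :: int and B :: "nat \<Rightarrow> nat \<Rightarrow> rat" and \<alpha> :: "nat \<Rightarrow> 'k"
  assumes degree: "\<exists>w::nat \<Rightarrow> 'k. is_Q_basis (r+2) w"
    and units_indep: "Q_lin_indep (r+1) u"
    and data: "basis_data r \<sigma> u S h e A t B \<alpha>"
    and units_stable: "\<And>k y. k \<le> r \<Longrightarrow> y \<in> S \<Longrightarrow> u k * y \<in> S"
begin

lemma Z_basis: "is_Z_basis (r+2) S e"
  and e_0: "e 0 = h"
  and triangular:
    "\<forall>j\<le>r. (\<forall>k. j < k \<longrightarrow> zcoord (r+2) e (u j * h) k = 0) \<and> zcoord (r+2) e (u j * h) j > 0"
  and elem_divisors: "elem_divisors (Suc r) (Amat r e u h) A"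
  and t_eq: "t = A r"
  and scaled_inverse: "\<And>k j. k \<le> r \<Longrightarrow> j \<le> r \<Longrightarrow>
    (\<Sum>i\<in>{1..r+1}. Amat r e u h k (i - 1) * B i j) = (if k = j then of_int t else 0)"
  and alpha_eq: "\<alpha> j = (\<Sum>i\<in>{1..r+1}. of_rat (B i j) * e i)"
  using data unfolding basis_data_def by auto

lemma Q_basis: "is_Q_basis (r+2) e"
  using degree Q_lin_indep_is_Q_basis is_Z_basis_Q_lin_indep[OF Z_basis] by blast

lemma h_nonzero: "h \<noteq> 0"
proof
  assume "h = 0"
  have "qcoord (r+2) e (e 0) 0 = 1" using qcoord_basis[OF Q_basis, of 0 0] by simp
  moreover have "qcoord (r+2) e 0 0 = 0" using rat_linear_zero[OF rat_linear_qcoord[OF Q_basis]] by simp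
  ultimately show False using \<open>h = 0\<close> e_0 by simp
qed

lemma h_in_lattice: "h \<in> S"
  using is_Z_basis_basis_mem[OF Z_basis, of 0] by (simp add: e_0)

abbreviation \<phi> :: "'k \<Rightarrow> rat" where "\<phi> \<equiv> form_ext r e u h"

lemma rat_linear_\<phi>: "rat_linear \<phi>"
  by (rule rat_linear_form_ext[OF Q_basis])

lemma \<phi>_units_h: "k \<le> r \<Longrightarrow> \<phi> (u k * h) = 0"
  by (rule form_ext_vanishes[OF Q_basis Z_basis _ units_stable[OF _ h_in_lattice]])

lemma \<phi>_last_basis: "\<phi> (e (r+1)) = 1"
  by (rule form_ext_last_basis[OF Q_basis triangular])

lemma rat_linear_\<phi>_times_h: "rat_linear (\<lambda>y. \<phi> (y * h))"
  by (rule rat_linear_mult_right[OF rat_linear_\<phi>])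

lemma \<phi>_last_basis_div_h: "\<phi> (e (r+1) / h * h) = 1"
  using h_nonzero \<phi>_last_basis by simp

lemma \<phi>_proportional:
  assumes "rat_linear F" "\<And>k. k \<le> r \<Longrightarrow> F (u k) = 0"
  shows "F y = \<phi> (y * h) * F (e (r+1) / h)"
proof -
  obtain w :: "nat \<Rightarrow> 'k" where w: "is_Q_basis (Suc (Suc r)) w" using degree by auto
  show ?thesis
    using assms \<phi>_units_h
    by (intro rat_linear_proportional[OF w units_indep[simplified] rat_linear_\<phi>_times_h _
          \<phi>_last_basis_div_h]) (auto simp: less_Suc_eq_le)
qed

lemma \<phi>_kernel_rational:
  assumes "\<And>k. k \<le> r \<Longrightarrow> \<phi> (u k * y) = 0"
  shows "\<exists>l. y = of_rat l * h"
proof -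
  obtain w :: "nat \<Rightarrow> 'k" where w: "is_Q_basis (Suc (Suc r)) w" using degree by auto
  have "y / h \<in> \<rat>"
    using assms \<phi>_units_h h_nonzero
    by (intro rat_linear_multiplier_rational[OF w units_indep[simplified] rat_linear_\<phi>_times_h _
          \<phi>_last_basis_div_h]) (auto simp: less_Suc_eq_le mult.assoc)
  then show ?thesis using h_nonzero by (auto elim!: Rats_cases simp: field_simps)
qed

lemma Amat_eq: "k \<le> r \<Longrightarrow> i \<le> r \<Longrightarrow> Amat r e u h k i = \<phi> (u k * e (i+1))"
  unfolding Amat_def
  by (intro form_a_eq_form_ext[OF Q_basis Z_basis] units_stable is_Z_basis_basis_mem[OF Z_basis])
    simp_all

lemma \<phi>_alpha: "k \<le> r \<Longrightarrow> j \<le> r \<Longrightarrow> \<phi> (u k * \<alpha> j) = (if k = j then of_int t else 0)"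
proof -
  assume k: "k \<le> r" and j: "j \<le> r"
  have sum_eq: "u k * \<alpha> j = (\<Sum>i\<in>{1..r+1}. of_rat (B i j) * (u k * e i))"
    unfolding alpha_eq sum_distrib_left by (simp add: mult.left_commute)
  have "\<phi> (u k * \<alpha> j) = (\<Sum>i\<in>{1..r+1}. B i j * \<phi> (u k * e i))"
    unfolding sum_eq by (rule rat_linear_sum[OF rat_linear_\<phi>])
  also have "\<dots> = (\<Sum>i\<in>{1..r+1}. Amat r e u h k (i - 1) * B i j)"
    using k by (intro sum.cong) (auto simp: Amat_eq)
  finally show ?thesis using scaled_inverse[OF k j] by simp
qed

lemma Amat_det_nonzero: "det (mat (Suc r) (Suc r) (\<lambda>(k, i). Amat r e u h k i)) \<noteq> 0"
proof
  let ?M = "mat (Suc r) (Suc r) (\<lambda>(k, i). Amat r e u h k i)"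
  assume "det ?M = 0"
  then obtain v where v: "v \<in> carrier_vec (Suc r)" "v \<noteq> 0\<^sub>v (Suc r)" "?M *\<^sub>v v = 0\<^sub>v (Suc r)"
    using det_0_iff_vec_prod_zero_field[of ?M "Suc r"] by auto
  define c where "c i = (if i = 0 then 0 else v $ (i - 1))" for i
  define y where "y = (\<Sum>i<r+2. of_rat (c i) * e i)"
  have "\<phi> (u k * y) = 0" if k: "k \<le> r" for k
  proof -
    have sum_eq: "u k * y = (\<Sum>i<r+2. of_rat (c i) * (u k * e i))"
      unfolding y_def sum_distrib_left by (simp add: mult.left_commute)
    have "\<phi> (u k * y) = (\<Sum>i<r+2. c i * \<phi> (u k * e i))"
      unfolding sum_eq by (rule rat_linear_sum[OF rat_linear_\<phi>])
    also have "\<dots> = (\<Sum>i<Suc r. c (Suc i) * \<phi> (u k * e (Suc i)))"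
      by (simp only: add_2_eq_Suc' sum.lessThan_Suc_shift) (simp add: c_def)
    also have "\<dots> = (\<Sum>i<Suc r. Amat r e u h k i * v $ i)"
      by (rule sum.cong) (use k in \<open>auto simp: c_def Amat_eq\<close>)
    also have "\<dots> = (?M *\<^sub>v v) $ k"
      using k v(1) by (simp add: scalar_prod_def atLeast0LessThan)
    finally show ?thesis using v(3) k by simp
  qed
  then obtain l where l: "y = of_rat l * e 0" using \<phi>_kernel_rational e_0 by metis
  have "v $ i = 0" if i: "i < Suc r" for i
  proof -
    have "v $ i = qcoord (r+2) e y (Suc i)"
      using i by (subst qcoord_eqI[OF Q_basis y_def]) (simp_all add: c_def)
    also have "\<dots> = l * qcoord (r+2) e (e 0) (Suc i)"
      unfolding l using i by (intro rat_linear_scale rat_linear_qcoord[OF Q_basis]) simp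
    also have "\<dots> = 0" using i qcoord_basis[OF Q_basis, of 0 "Suc i"] by simp
    finally show ?thesis .
  qed
  then have "v = 0\<^sub>v (Suc r)" using v(1) by (intro eq_vecI) auto
  with v(2) show False by contradiction
qed

lemma t_nonzero: "t \<noteq> 0"
  and B_Ints: "\<And>i j. 1 \<le> i \<Longrightarrow> i \<le> r+1 \<Longrightarrow> j \<le> r \<Longrightarrow> B i j \<in> \<int>"
proof -
  have "(\<Sum>k<Suc r. Amat r e u h i k * B (Suc k) j) = (if i = j then of_int (A r) else 0)"
    if "i < Suc r" "j < Suc r" for i j
  proof -
    have "(\<Sum>k<Suc r. Amat r e u h i k * B (Suc k) j)
        = (\<Sum>k\<in>{Suc 0..Suc r}. Amat r e u h i (k - 1) * B k j)"
      unfolding sum.shift_bounds_cl_Suc_ivl by (simp add: atLeast0AtMost lessThan_Suc_atMost)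
    then show ?thesis using scaled_inverse[of i j] that t_eq by simp
  qed
  note Ints = elem_divisors_scaled_inverse_Ints[OF elem_divisors Amat_det_nonzero this]
  show "t \<noteq> 0" using Ints(1) t_eq by simp
  show "B i j \<in> \<int>" if "1 \<le> i" "i \<le> r+1" "j \<le> r" for i j
    using Ints(2)[of "i - 1" j] that by simp
qed

lemma alpha_sum: "\<alpha> j = (\<Sum>k<r+2. of_rat (if k = 0 then 0 else B k j) * e k)"
proof -
  have "{..<r+2} = insert 0 {1..r+1}" by auto
  then have "(\<Sum>k<r+2. of_rat (if k = 0 then 0 else B k j) * e k)
      = (\<Sum>k\<in>{1..r+1}. of_rat (if k = 0 then 0 else B k j) * e k)"
    by simp
  also have "\<dots> = \<alpha> j" unfolding alpha_eq by (rule sum.cong) auto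
  finally show ?thesis ..
qed

lemma alpha_in_lattice: "j \<le> r \<Longrightarrow> \<alpha> j \<in> S"
proof -
  assume j: "j \<le> r"
  have "of_rat (if k = 0 then 0 else B k j) = (of_int (if k = 0 then 0 else \<lfloor>B k j\<rfloor>) :: 'k)"
    if "k < r+2" for k
    using that B_Ints[of k j] j by (auto elim!: Ints_cases)
  then have "\<alpha> j = (\<Sum>k<r+2. of_int (if k = 0 then 0 else \<lfloor>B k j\<rfloor>) * e k)"
    unfolding alpha_sum by (intro sum.cong) auto
  then show ?thesis using is_Z_basis_mem[OF Z_basis] by metis
qed

lemma alpha_unique_mod_h:
  assumes y: "y \<in> S" and j: "j \<le> r"
    and \<phi>y: "\<And>k. k \<le> r \<Longrightarrow> \<phi> (u k * y) = (if k = j then s * of_int t else 0)"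
  shows "\<exists>m::int. of_rat s * \<alpha> j = y + of_int m * h"
proof -
  define D where "D = of_rat s * \<alpha> j - y"
  have "\<phi> (u k * D) = 0" if "k \<le> r" for k
    using \<phi>_alpha[OF that j] \<phi>y[OF that]
    by (simp add: D_def right_diff_distrib mult.left_commute rat_linear_diff[OF rat_linear_\<phi>]
        rat_linear_scale[OF rat_linear_\<phi>])
  then obtain l where l: "D = of_rat l * e 0" using \<phi>_kernel_rational e_0 by metis
  have linear: "rat_linear (\<lambda>x. qcoord (r+2) e x 0)" by (rule rat_linear_qcoord[OF Q_basis]) simp
  have "qcoord (r+2) e D 0 = l * qcoord (r+2) e (e 0) 0"
    unfolding l by (rule rat_linear_scale[OF linear])
  then have "l = qcoord (r+2) e D 0" using qcoord_basis[OF Q_basis, of 0 0] by simp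
  also have "\<dots> = s * qcoord (r+2) e (\<alpha> j) 0 - qcoord (r+2) e y 0"
    unfolding D_def rat_linear_diff[OF linear] rat_linear_scale[OF linear] ..
  also have "qcoord (r+2) e (\<alpha> j) 0 = 0"
    by (subst qcoord_eqI[OF Q_basis alpha_sum]) simp_all
  also have "qcoord (r+2) e y 0 = of_int (zcoord (r+2) e y 0)"
    by (rule qcoord_zcoord[OF Q_basis Z_basis y]) simp
  finally have "of_rat s * \<alpha> j = y + of_int (- zcoord (r+2) e y 0) * h"
    using l e_0 by (simp add: D_def algebra_simps of_rat_minus)
  then show ?thesis by blast
qed

end

lemma scaled_alpha_congruence:
  assumes Lat: "lattice_basis r \<sigma> u L h' e A t B \<alpha>"
    and Int: "lattice_basis r \<sigma> u O_K 1 et At tt Bt \<alpha>t"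
    and L_stable: "\<And>z y. z \<in> O_K \<Longrightarrow> y \<in> L \<Longrightarrow> z * y \<in> L"
    and u_0: "u 0 = 1" and j: "j \<le> r"
  shows "\<exists>m::int. of_rat (form_a r e u h' (\<alpha>t 0 * h') / of_int t) * \<alpha> j = \<alpha>t j * h' + of_int m * h'"
proof -
  interpret Lat: lattice_basis r \<sigma> u L h' e A t B \<alpha> by (fact Lat)
  interpret Int: lattice_basis r \<sigma> u O_K 1 et At tt Bt \<alpha>t by (fact Int)
  define c where "c = Lat.\<phi> (et (r+1) * h')"
  have c: "Lat.\<phi> (y * h') = Int.\<phi> y * c" for y
    using Int.\<phi>_proportional[OF Lat.rat_linear_\<phi>_times_h Lat.\<phi>_units_h, of y] by (simp add: c_def)
  have alpha_t_h': "\<alpha>t i * h' \<in> L" if "i \<le> r" for i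
    by (rule L_stable[OF Int.alpha_in_lattice[OF that] Lat.h_in_lattice])
  have "form_a r e u h' (\<alpha>t 0 * h') = of_int tt * c"
    using form_a_eq_form_ext[OF Lat.Q_basis Lat.Z_basis alpha_t_h'] c Int.\<phi>_alpha[of 0 0] u_0
    by simp
  moreover have "\<exists>m::int. of_rat (of_int tt * c / of_int t) * \<alpha> j = \<alpha>t j * h' + of_int m * h'"
  proof (rule Lat.alpha_unique_mod_h[OF alpha_t_h'[OF j] j])
    fix k assume "k \<le> r"
    then show "Lat.\<phi> (u k * (\<alpha>t j * h')) = (if k = j then of_int tt * c / of_int t * of_int t else 0)"
      using c[of "u k * \<alpha>t j"] Int.\<phi>_alpha[OF _ j] Lat.t_nonzero by (simp add: mult.assoc)
  qed
  ultimately show ?thesis by simp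
qed

theorem proposition14:
  fixes r :: nat
    and \<sigma> :: "nat \<Rightarrow> 'k::field_char_0 \<Rightarrow> complex"
    and f b a L :: "'k set"
    and q :: int and N :: nat
    and u :: "nat \<Rightarrow> 'k"
    and h h' :: 'k and m :: int
    and e et :: "nat \<Rightarrow> 'k"
    and A At :: "nat \<Rightarrow> int" and t tt :: int
    and B Bt :: "nat \<Rightarrow> nat \<Rightarrow> rat"
    and \<alpha> \<alpha>t :: "nat \<Rightarrow> 'k"
  assumes degree: "\<exists>w::nat \<Rightarrow> 'k. is_Q_basis (r+2) w"
    and emb: "\<forall>j<r+2. embedding (\<sigma> j)"
    and emb_real: "\<forall>j<r. \<forall>x. \<sigma> j x \<in> \<real>"
    and emb_complex: "\<exists>x. \<sigma> r x \<notin> \<real>"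
    and emb_conj: "\<forall>x. \<sigma> (r+1) x = cnj (\<sigma> r x)"
    and emb_distinct: "inj_on \<sigma> {..<r+2}"
    and emb_all: "\<forall>\<tau>. embedding \<tau> \<longrightarrow> (\<exists>j<r+2. \<tau> = \<sigma> j)"
    and f: "int_ideal f" "f \<noteq> O_K"
    and q: "q > 0" "{n::int. of_int n \<in> f} = {q * k | k. True}"
    and b: "int_ideal b" "coprime_ideals b f"
    and L: "L = ideal_mult f (frac_inv b)"
    and a: "int_ideal a" "coprime_ideals a (ideal_mult f b)"
    and cyc: "cyclic_quot (ideal_mult (frac_inv a) L) L"
    and N: "N = ideal_norm a"
    and units: "u 0 = 1" "\<forall>j\<in>{1..r}. u j \<in> pos_units_mod r \<sigma> f"
    and indep: "Q_lin_indep (r+1) u"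
    and adm: "admissible L a q N h"
    and hm: "h = of_int m * h'" "m > 0" "primitive_in L h'"
    and data_h: "basis_data r \<sigma> u L h' e A t B \<alpha>"
    and data_1: "basis_data r \<sigma> u O_K 1 et At tt Bt \<alpha>t"
  shows "let \<epsilon> = sgn (form_a r e u h' (\<alpha>t 0 * h'));
             l = \<bar>form_a r e u h' (\<alpha>t 0 * h')\<bar> / of_int t
         in \<forall>j\<le>r. \<exists>mj::int. of_rat (\<epsilon> * l) * \<alpha> j = \<alpha>t j * h' + of_int mj * h'"
proof -
  have units_int: "u k \<in> O_K" if "k \<le> r" for k
    using that units one_in_O_K unfolding pos_units_mod_def by (cases "k = 0") auto
  have L_stable: "z * y \<in> L" if "z \<in> O_K" "y \<in> L" for z y
    using ideal_mult_O_K_stable[OF f(1) that(1)] that(2) unfolding L .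
  have Lat: "lattice_basis r \<sigma> u L h' e A t B \<alpha>"
    using L_stable units_int by (intro lattice_basis.intro[OF degree indep data_h]) blast
  have "z * y \<in> O_K" if "z \<in> O_K" "y \<in> O_K" for z y :: 'k
    using lattice_basis.e_0[OF Lat] lattice_basis.h_nonzero[OF Lat] L_stable that
    by (intro O_K_mult_closed[OF lattice_basis.Z_basis[OF Lat], where i = 0]) simp_all
  then have Int: "lattice_basis r \<sigma> u O_K 1 et At tt Bt \<alpha>t"
    using units_int by (intro lattice_basis.intro[OF degree indep data_1]) blast
  show ?thesis
    using scaled_alpha_congruence[OF Lat Int L_stable units(1)] by (simp add: sgn_mult_abs)
qed

end
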